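(* Let $G$ be a torsion-free group, $\mathbb{F}$ a field, $\alpha$ a zero divisor in $\mathbb{F}[G]$ and $\beta$ a mate of $\alpha$. If $|supp(\alpha)|\le 5$, then $\langle h^{-1}supp(\alpha)\rangle=\langle supp(\beta)g^{-1}\rangle$ for all $h\in supp(\alpha)$ and all $g\in supp(\beta)$.
   Context: A zero divisor is a non-zero $\alpha$ with $\alpha\beta'=0$ for some non-zero $\beta'$. A mate of $\alpha$ is a non-zero $\beta\in\mathbb{F}[G]$ with $\alpha\beta=0$ such that $|supp(\beta)|\le|supp(\beta')|$ for every non-zero $\beta'\in\mathbb{F}[G]$ with $\alpha\beta'=0$. Here $supp(\gamma)=\{x\in G:\gamma_x\ne0\}$. *)

theory Defs
  imports "HOL-Algebra.Algebra"
begin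

text \<open>Group algebra F[G] over a field (type class field) of a group G (HOL-Algebra locale).
  Elements are finitely supported functions carrier G to F, vanishing outside carrier G.\<close>

definition torsion_free :: "('g, 'b) monoid_scheme \<Rightarrow> bool" where
  "torsion_free G \<longleftrightarrow>
     (\<forall>x\<in>carrier G. x \<noteq> \<one>\<^bsub>G\<^esub> \<longrightarrow> (\<forall>n::nat. n > 0 \<longrightarrow> x [^]\<^bsub>G\<^esub> n \<noteq> \<one>\<^bsub>G\<^esub>))"

definition supp :: "('g \<Rightarrow> 'f::zero) \<Rightarrow> 'g set" where
  "supp a = {x. a x \<noteq> 0}"

definition gr_elem :: "('g, 'b) monoid_scheme \<Rightarrow> ('g \<Rightarrow> 'f::zero) \<Rightarrow> bool" where
  "gr_elem G a \<longleftrightarrow> finite (supp a) \<and> supp a \<subseteq> carrier G"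

definition gr_mult :: "('g, 'b) monoid_scheme \<Rightarrow> ('g \<Rightarrow> 'f::field) \<Rightarrow> ('g \<Rightarrow> 'f) \<Rightarrow> ('g \<Rightarrow> 'f)" where
  "gr_mult G a b = (\<lambda>x. if x \<in> carrier G
       then (\<Sum>y\<in>supp a. a y * b (inv\<^bsub>G\<^esub> y \<otimes>\<^bsub>G\<^esub> x)) else 0)"

definition zero_divisor :: "('g, 'b) monoid_scheme \<Rightarrow> ('g \<Rightarrow> 'f::field) \<Rightarrow> bool" where
  "zero_divisor G \<alpha> \<longleftrightarrow> gr_elem G \<alpha> \<and> \<alpha> \<noteq> (\<lambda>_. 0) \<and>
     (\<exists>\<beta>'. gr_elem G \<beta>' \<and> \<beta>' \<noteq> (\<lambda>_. 0) \<and> gr_mult G \<alpha> \<beta>' = (\<lambda>_. 0))"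

definition mate :: "('g, 'b) monoid_scheme \<Rightarrow> ('g \<Rightarrow> 'f::field) \<Rightarrow> ('g \<Rightarrow> 'f) \<Rightarrow> bool" where
  "mate G \<alpha> \<beta> \<longleftrightarrow> gr_elem G \<beta> \<and> \<beta> \<noteq> (\<lambda>_. 0) \<and> gr_mult G \<alpha> \<beta> = (\<lambda>_. 0) \<and>
     (\<forall>\<beta>'. gr_elem G \<beta>' \<and> \<beta>' \<noteq> (\<lambda>_. 0) \<and> gr_mult G \<alpha> \<beta>' = (\<lambda>_. 0)
        \<longrightarrow> card (supp \<beta>) \<le> card (supp \<beta>'))"

end

theory Submission
  imports Defs
begin

text \<open>Let \<open>H = \<langle>h\<inverse> supp \<alpha>\<rangle>\<close> and \<open>K = \<langle>supp \<beta> g\<inverse>\<rangle>\<close>. If \<open>supp \<beta> \<subseteq> K g\<close>, each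
  coefficient of \<open>\<alpha> \<beta>\<close> only involves terms of \<alpha> from a single left coset of \<open>K\<close>, so the
  parts of \<alpha> on \<open>h K\<close> and off \<open>h K\<close> both annihilate \<beta>. In a torsion-free group an element
  with at most two support points is not a zero divisor (a two-term relation would make \<open>supp \<beta>\<close>
  invariant under left translation by a non-trivial element), so with \<open>|supp \<alpha>| \<le> 5\<close> one of
  the two parts vanishes, i.e. \<open>supp \<alpha> \<subseteq> h K\<close> and \<open>H \<subseteq> K\<close>. Conversely, the part of \<beta>
  on \<open>H g\<close> is annihilated by \<alpha> and contains \<open>g\<close>, so minimality of the mate forces
  \<open>supp \<beta> \<subseteq> H g\<close> and \<open>K \<subseteq> H\<close>.\<close>

definition gr_restrict :: "'g set \<Rightarrow> ('g \<Rightarrow> 'f::zero) \<Rightarrow> 'g \<Rightarrow> 'f" where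
  "gr_restrict S a = (\<lambda>x. if x \<in> S then a x else 0)"

lemma supp_gr_restrict: "supp (gr_restrict S a) = supp a \<inter> S"
  by (auto simp: supp_def gr_restrict_def)

lemma supp_eq_empty_iff: "supp a = {} \<longleftrightarrow> a = (\<lambda>_. 0)"
  by (auto simp: supp_def fun_eq_iff)

lemma gr_elem_gr_restrict: "gr_elem G a \<Longrightarrow> gr_elem G (gr_restrict S a)"
  by (auto simp: gr_elem_def supp_gr_restrict)

lemma card_supp_gr_restrict_Compl:
  "finite (supp a) \<Longrightarrow>
    card (supp (gr_restrict S a)) + card (supp (gr_restrict (- S) a)) = card (supp a)"
  using card_Int_Diff[of "supp a" S] by (simp add: supp_gr_restrict Diff_eq)

lemma gr_mult_outside_carrier: "w \<notin> carrier G \<Longrightarrow> gr_mult G a b w = 0"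
  by (simp add: gr_mult_def)

lemma gr_mult_sum:
  assumes "finite A" "supp a \<subseteq> A" "x \<in> carrier G"
  shows "gr_mult G a b x = (\<Sum>y\<in>A. a y * b (inv\<^bsub>G\<^esub> y \<otimes>\<^bsub>G\<^esub> x))"
  unfolding gr_mult_def using assms
  by (auto intro!: sum.mono_neutral_left simp: supp_def)

context group
begin

lemma subgroup_mult_mem_iff_left:
  assumes K: "subgroup K G" and k: "k \<in> K" and a: "a \<in> carrier G"
  shows "k \<otimes> a \<in> K \<longleftrightarrow> a \<in> K"
proof
  assume "k \<otimes> a \<in> K"
  then have "inv k \<otimes> (k \<otimes> a) \<in> K"
    by (rule subgroup.m_closed[OF K subgroup.m_inv_closed[OF K k]])
  moreover have "k \<in> carrier G" using subgroup.mem_carrier[OF K k] .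
  ultimately show "a \<in> K" using a by (simp add: m_assoc[symmetric])
qed (rule subgroup.m_closed[OF K k])

lemma subgroup_mult_mem_iff_right:
  assumes K: "subgroup K G" and k: "k \<in> K" and a: "a \<in> carrier G"
  shows "a \<otimes> k \<in> K \<longleftrightarrow> a \<in> K"
proof
  assume "a \<otimes> k \<in> K"
  then have "(a \<otimes> k) \<otimes> inv k \<in> K"
    by (rule subgroup.m_closed[OF K _ subgroup.m_inv_closed[OF K k]])
  moreover have "k \<in> carrier G" using subgroup.mem_carrier[OF K k] .
  ultimately show "a \<in> K" using a by (simp add: m_assoc)
next
  assume "a \<in> K"
  then show "a \<otimes> k \<in> K" using subgroup.m_closed[OF K _ k] by blast
qed

lemma double_coset_factor:
  assumes "h \<in> carrier G" "g \<in> carrier G" "y \<in> carrier G" "z \<in> carrier G"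
  shows "inv h \<otimes> (y \<otimes> z) \<otimes> inv g = (inv h \<otimes> y) \<otimes> (z \<otimes> inv g)"
  using assms by (simp add: m_assoc)

lemma gr_mult_gr_restrict_left:
  assumes fin: "finite (supp a)" and sa: "supp a \<subseteq> carrier G"
    and ST: "\<And>y z. y \<in> supp a \<Longrightarrow> z \<in> supp b \<Longrightarrow> y \<in> S \<longleftrightarrow> y \<otimes> z \<in> T"
  shows "gr_mult G (gr_restrict S a) b w = (if w \<in> T then gr_mult G a b w else 0)"
proof (cases "w \<in> carrier G")
  case w: True
  have "gr_mult G (gr_restrict S a) b w = (\<Sum>y\<in>supp a. gr_restrict S a y * b (inv y \<otimes> w))"
    by (rule gr_mult_sum[OF fin _ w]) (simp add: supp_gr_restrict)
  also have "\<dots> = (\<Sum>y\<in>supp a. if w \<in> T then a y * b (inv y \<otimes> w) else 0)"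
  proof (rule sum.cong)
    fix y assume y: "y \<in> supp a"
    then have "y \<otimes> (inv y \<otimes> w) = w" using sa w by (auto simp: m_assoc[symmetric])
    then show "gr_restrict S a y * b (inv y \<otimes> w) = (if w \<in> T then a y * b (inv y \<otimes> w) else 0)"
      using ST[OF y, of "inv y \<otimes> w"] by (auto simp: gr_restrict_def supp_def)
  qed simp
  also have "\<dots> = (if w \<in> T then gr_mult G a b w else 0)"
    using gr_mult_sum[OF fin _ w, of a] by simp
  finally show ?thesis .
qed (simp add: gr_mult_outside_carrier)

lemma gr_mult_gr_restrict_right:
  assumes fin: "finite (supp a)" and sa: "supp a \<subseteq> carrier G"
    and ST: "\<And>y z. y \<in> supp a \<Longrightarrow> z \<in> supp b \<Longrightarrow> z \<in> S \<longleftrightarrow> y \<otimes> z \<in> T"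
  shows "gr_mult G a (gr_restrict S b) w = (if w \<in> T then gr_mult G a b w else 0)"
proof (cases "w \<in> carrier G")
  case w: True
  have "gr_mult G a (gr_restrict S b) w = (\<Sum>y\<in>supp a. a y * gr_restrict S b (inv y \<otimes> w))"
    by (rule gr_mult_sum[OF fin _ w]) simp
  also have "\<dots> = (\<Sum>y\<in>supp a. if w \<in> T then a y * b (inv y \<otimes> w) else 0)"
  proof (rule sum.cong)
    fix y assume y: "y \<in> supp a"
    then have "y \<otimes> (inv y \<otimes> w) = w" using sa w by (auto simp: m_assoc[symmetric])
    then show "a y * gr_restrict S b (inv y \<otimes> w) = (if w \<in> T then a y * b (inv y \<otimes> w) else 0)"
      using ST[OF y, of "inv y \<otimes> w"] by (auto simp: gr_restrict_def supp_def)
  qed simp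
  also have "\<dots> = (if w \<in> T then gr_mult G a b w else 0)"
    using gr_mult_sum[OF fin _ w, of a] by simp
  finally show ?thesis .
qed (simp add: gr_mult_outside_carrier)

lemma gr_mult_zero_partner:
  assumes ab: "gr_mult G a b = (\<lambda>_. 0)" and fin: "finite (supp a)" and sa: "supp a \<subseteq> carrier G"
    and x: "x \<in> supp a" and z: "z \<in> supp b" and zc: "z \<in> carrier G"
  shows "\<exists>y\<in>supp a. y \<noteq> x \<and> inv y \<otimes> (x \<otimes> z) \<in> supp b"
proof (rule ccontr)
  assume none: "\<not> ?thesis"
  have xc: "x \<in> carrier G" using x sa by auto
  have rest: "(\<Sum>y\<in>supp a - {x}. a y * b (inv y \<otimes> (x \<otimes> z))) = 0"
    using none by (intro sum.neutral) (auto simp: supp_def)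
  have "gr_mult G a b (x \<otimes> z) = (\<Sum>y\<in>supp a. a y * b (inv y \<otimes> (x \<otimes> z)))"
    by (rule gr_mult_sum[OF fin order_refl]) (use xc zc in simp)
  also have "\<dots> = a x * b (inv x \<otimes> (x \<otimes> z)) +
      (\<Sum>y\<in>supp a - {x}. a y * b (inv y \<otimes> (x \<otimes> z)))"
    by (rule sum.remove[OF fin x])
  also have "\<dots> = a x * b z"
    using rest xc zc by (simp add: m_assoc[symmetric])
  finally show False using ab x z by (simp add: supp_def)
qed

lemma torsion_free_translation_invariant_finite:
  assumes tf: "torsion_free G" and t: "t \<in> carrier G" "t \<noteq> \<one>"
    and fin: "finite S" and S: "S \<subseteq> carrier G" and inv: "\<And>z. z \<in> S \<Longrightarrow> t \<otimes> z \<in> S"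
  shows "S = {}"
proof
  show "S \<subseteq> {}"
  proof
    fix z assume z: "z \<in> S"
    have zc: "z \<in> carrier G" using z S by auto
    have orbit: "t [^] n \<otimes> z \<in> S" for n :: nat
    proof (induction n)
      case (Suc n)
      have "t [^] Suc n \<otimes> z = t \<otimes> (t [^] n \<otimes> z)"
        using t zc by (simp only: nat_pow_Suc2) (simp add: m_assoc)
      then show ?case using inv[OF Suc] by simp
    qed (use z zc in simp)
    have "finite (range (\<lambda>n::nat. t [^] n \<otimes> z))"
      using orbit fin by (auto intro: finite_subset)
    then have "\<not> inj (\<lambda>n::nat. t [^] n \<otimes> z)"
      using finite_imageD by auto
    then obtain m n :: nat where mn: "m \<noteq> n" "t [^] m \<otimes> z = t [^] n \<otimes> z"
      by (auto simp: inj_def)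
    then have e: "t [^] m = t [^] n" using t zc by simp
    have "t [^] (m - n) = \<one>" "t [^] (n - m) = \<one>"
      using pow_eq_div2[OF t(1) e] pow_eq_div2[OF t(1) e[symmetric]] by auto
    then obtain k :: nat where "0 < k" "t [^] k = \<one>"
      using mn(1) by (metis zero_less_diff linorder_neqE_nat)
    then show "z \<in> {}" using tf t by (auto simp: torsion_free_def)
  qed
qed simp

lemma torsion_free_zero_divisor_card_supp_ge_3:
  assumes tf: "torsion_free G" and ga: "gr_elem G a" and a: "a \<noteq> (\<lambda>_. 0)"
    and gb: "gr_elem G b" and b: "b \<noteq> (\<lambda>_. 0)" and ab: "gr_mult G a b = (\<lambda>_. 0)"
  shows "3 \<le> card (supp a)"
proof (rule ccontr)
  assume "\<not> 3 \<le> card (supp a)"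
  moreover have fa: "finite (supp a)" and sa: "supp a \<subseteq> carrier G"
    and fb: "finite (supp b)" and sb: "supp b \<subseteq> carrier G"
    using ga gb by (auto simp: gr_elem_def)
  moreover have "supp a \<noteq> {}" "supp b \<noteq> {}" using a b by (auto simp: supp_def)
  ultimately have "card (supp a) = 1 \<or> card (supp a) = 2"
    using card_gt_0_iff[of "supp a"] by linarith
  then consider x where "supp a = {x}" | x y where "supp a = {x, y}" "x \<noteq> y"
    by (metis card_1_singletonE card_2_iff)
  then show False
  proof cases
    case 1
    then show False
      using gr_mult_zero_partner[OF ab fa sa] \<open>supp b \<noteq> {}\<close> sb by blast
  next
    case (2 x y)
    define t where "t = inv y \<otimes> x"
    have xc: "x \<in> carrier G" and yc: "y \<in> carrier G" using 2 sa by auto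
    have tc: "t \<in> carrier G" using xc yc by (simp add: t_def)
    have "y \<otimes> t = x" using xc yc by (simp add: t_def m_assoc[symmetric])
    then have "t \<noteq> \<one>" using 2(2) yc by auto
    moreover have "t \<otimes> z \<in> supp b" if z: "z \<in> supp b" for z
    proof -
      have "inv y \<otimes> (x \<otimes> z) \<in> supp b"
        using gr_mult_zero_partner[OF ab fa sa _ z] 2 sb z by blast
      then show ?thesis using xc yc z sb by (auto simp: t_def m_assoc)
    qed
    ultimately have "supp b = {}"
      by (rule torsion_free_translation_invariant_finite[OF tf tc _ fb sb])
    then show False using \<open>supp b \<noteq> {}\<close> by simp
  qed
qed

lemma small_zero_divisor_supp_in_left_coset:
  assumes tf: "torsion_free G" and ga: "gr_elem G \<alpha>" and card: "card (supp \<alpha>) < 6"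
    and gb: "gr_elem G \<beta>" and b: "\<beta> \<noteq> (\<lambda>_. 0)" and ab: "gr_mult G \<alpha> \<beta> = (\<lambda>_. 0)"
    and K: "subgroup K G" and gc: "g \<in> carrier G" and B: "(\<lambda>z. z \<otimes> inv g) ` supp \<beta> \<subseteq> K"
    and h: "h \<in> supp \<alpha>"
  shows "(\<lambda>y. inv h \<otimes> y) ` supp \<alpha> \<subseteq> K"
proof -
  have fa: "finite (supp \<alpha>)" and sa: "supp \<alpha> \<subseteq> carrier G" and sb: "supp \<beta> \<subseteq> carrier G"
    using ga gb by (auto simp: gr_elem_def)
  have hc: "h \<in> carrier G" using h sa by auto
  define S where "S = {y. inv h \<otimes> y \<in> K}"
  define T where "T = {w. inv h \<otimes> w \<otimes> inv g \<in> K}"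
  have split: "y \<in> S \<longleftrightarrow> y \<otimes> z \<in> T" if y: "y \<in> supp \<alpha>" and z: "z \<in> supp \<beta>" for y z
  proof -
    have "y \<in> carrier G" "z \<in> carrier G" and "z \<otimes> inv g \<in> K" using y z sa sb B by auto
    then show ?thesis
      using subgroup_mult_mem_iff_right[OF K \<open>z \<otimes> inv g \<in> K\<close>] double_coset_factor[OF hc gc] hc
      by (simp add: S_def T_def)
  qed
  then have split_Compl: "y \<in> - S \<longleftrightarrow> y \<otimes> z \<in> - T" if "y \<in> supp \<alpha>" "z \<in> supp \<beta>" for y z
    using that by simp
  have inside: "gr_mult G (gr_restrict S \<alpha>) \<beta> = (\<lambda>_. 0)"
    and outside: "gr_mult G (gr_restrict (- S) \<alpha>) \<beta> = (\<lambda>_. 0)"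
    using gr_mult_gr_restrict_left[OF fa sa split] gr_mult_gr_restrict_left[OF fa sa split_Compl] ab
    by (simp_all add: fun_eq_iff)
  have "h \<in> supp (gr_restrict S \<alpha>)"
    using h hc subgroup.one_closed[OF K] by (simp add: S_def supp_gr_restrict)
  then have "gr_restrict S \<alpha> \<noteq> (\<lambda>_. 0)" by (metis empty_iff supp_eq_empty_iff)
  then have "3 \<le> card (supp (gr_restrict S \<alpha>))"
    by (rule torsion_free_zero_divisor_card_supp_ge_3[OF tf gr_elem_gr_restrict[OF ga] _ gb b inside])
  have "gr_restrict (- S) \<alpha> = (\<lambda>_. 0)"
  proof (rule ccontr)
    assume "gr_restrict (- S) \<alpha> \<noteq> (\<lambda>_. 0)"
    then have "3 \<le> card (supp (gr_restrict (- S) \<alpha>))"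
      by (rule torsion_free_zero_divisor_card_supp_ge_3[OF tf gr_elem_gr_restrict[OF ga] _ gb b outside])
    then show False
      using \<open>3 \<le> card (supp (gr_restrict S \<alpha>))\<close> card_supp_gr_restrict_Compl[OF fa, of S] card
      by linarith
  qed
  then have "supp \<alpha> \<inter> - S = {}" by (metis supp_eq_empty_iff supp_gr_restrict)
  then show ?thesis by (auto simp: S_def)
qed

lemma mate_supp_in_right_coset:
  assumes mate: "mate G \<alpha> \<beta>" and ga: "gr_elem G \<alpha>"
    and H: "subgroup H G" and hc: "h \<in> carrier G" and A: "(\<lambda>y. inv h \<otimes> y) ` supp \<alpha> \<subseteq> H"
    and g: "g \<in> supp \<beta>"
  shows "(\<lambda>z. z \<otimes> inv g) ` supp \<beta> \<subseteq> H"
proof -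
  have gb: "gr_elem G \<beta>" and ab: "gr_mult G \<alpha> \<beta> = (\<lambda>_. 0)"
    and minimal: "\<And>\<beta>'. gr_elem G \<beta>' \<Longrightarrow> \<beta>' \<noteq> (\<lambda>_. 0) \<Longrightarrow> gr_mult G \<alpha> \<beta>' = (\<lambda>_. 0)
        \<Longrightarrow> card (supp \<beta>) \<le> card (supp \<beta>')"
    using mate unfolding mate_def by blast+
  have fa: "finite (supp \<alpha>)" and sa: "supp \<alpha> \<subseteq> carrier G"
    and fb: "finite (supp \<beta>)" and sb: "supp \<beta> \<subseteq> carrier G"
    using ga gb by (auto simp: gr_elem_def)
  have gc: "g \<in> carrier G" using g sb by auto
  define R where "R = {z. z \<otimes> inv g \<in> H}"
  define T where "T = {w. inv h \<otimes> w \<otimes> inv g \<in> H}"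
  have split: "z \<in> R \<longleftrightarrow> y \<otimes> z \<in> T" if y: "y \<in> supp \<alpha>" and z: "z \<in> supp \<beta>" for y z
  proof -
    have "y \<in> carrier G" "z \<in> carrier G" and "inv h \<otimes> y \<in> H" using y z sa sb A by auto
    then show ?thesis
      using subgroup_mult_mem_iff_left[OF H \<open>inv h \<otimes> y \<in> H\<close>] double_coset_factor[OF hc gc] gc
      by (simp add: R_def T_def)
  qed
  have "gr_mult G \<alpha> (gr_restrict R \<beta>) = (\<lambda>_. 0)"
    using gr_mult_gr_restrict_right[OF fa sa split] ab by (simp add: fun_eq_iff)
  moreover have "g \<in> supp (gr_restrict R \<beta>)"
    using g gc subgroup.one_closed[OF H] by (simp add: R_def supp_gr_restrict)
  then have "gr_restrict R \<beta> \<noteq> (\<lambda>_. 0)" by (metis empty_iff supp_eq_empty_iff)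
  ultimately have "card (supp \<beta>) \<le> card (supp \<beta> \<inter> R)"
    using minimal[OF gr_elem_gr_restrict[OF gb]] by (simp add: supp_gr_restrict)
  then have "supp \<beta> \<inter> R = supp \<beta>"
    using card_seteq[OF fb, of "supp \<beta> \<inter> R"] by blast
  then show ?thesis by (auto simp: R_def)
qed

end

theorem mainTheorem6:
  fixes G :: "('g, 'b) monoid_scheme" and \<alpha> \<beta> :: "'g \<Rightarrow> 'f::field"
  assumes "group G" and "torsion_free G"
    and "zero_divisor G \<alpha>" and "mate G \<alpha> \<beta>"
    and "card (supp \<alpha>) \<le> 5"
  shows "\<forall>h\<in>supp \<alpha>. \<forall>g\<in>supp \<beta>.
     generate G ((\<lambda>x. inv\<^bsub>G\<^esub> h \<otimes>\<^bsub>G\<^esub> x) ` supp \<alpha>) =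
     generate G ((\<lambda>x. x \<otimes>\<^bsub>G\<^esub> inv\<^bsub>G\<^esub> g) ` supp \<beta>)"
proof (intro ballI)
  interpret group G by (rule assms(1))
  fix h g assume h: "h \<in> supp \<alpha>" and g: "g \<in> supp \<beta>"
  have ga: "gr_elem G \<alpha>" using assms(3) by (simp add: zero_divisor_def)
  have gb: "gr_elem G \<beta>" and b: "\<beta> \<noteq> (\<lambda>_. 0)" and ab: "gr_mult G \<alpha> \<beta> = (\<lambda>_. 0)"
    using assms(4) by (simp_all add: mate_def)
  have hc: "h \<in> carrier G" and gc: "g \<in> carrier G" using h g ga gb by (auto simp: gr_elem_def)
  define A where "A = (\<lambda>x. inv\<^bsub>G\<^esub> h \<otimes>\<^bsub>G\<^esub> x) ` supp \<alpha>"
  define B where "B = (\<lambda>x. x \<otimes>\<^bsub>G\<^esub> inv\<^bsub>G\<^esub> g) ` supp \<beta>"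
  have "A \<subseteq> carrier G" "B \<subseteq> carrier G"
    using ga gb hc gc by (auto simp: A_def B_def gr_elem_def)
  then have subgroups: "subgroup (generate G A) G" "subgroup (generate G B) G"
    and generators: "A \<subseteq> generate G A" "B \<subseteq> generate G B"
    by (auto intro: generate_is_subgroup generate.incl)
  have "A \<subseteq> generate G B"
    using small_zero_divisor_supp_in_left_coset[OF assms(2) ga _ gb b ab subgroups(2) gc _ h]
      generators(2) assms(5) by (simp add: A_def B_def)
  moreover have "B \<subseteq> generate G A"
    using mate_supp_in_right_coset[OF assms(4) ga subgroups(1) hc _ g] generators(1)
    by (simp add: A_def B_def)
  ultimately show "generate G A = generate G B"
    using generate_subgroup_incl subgroups by blast
qed

end
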